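(* Let $\ell\in\mathbb{Z}_{\ge 2}$, let $a_{n,m}$ and $b_{n,m}=b_{n,m}(\ell)$ be as in the context, and let $b_n=\sum_{m\ge0}b_{n,m}$. Then the generating function $f(x)=\sum_{n\ge0}b_nx^n$ equals $$\frac{\sum_{k=0}^{\ell-1}U_k\big(\tfrac{1}{2x}\big)}{U_{\ell-1}\big(\tfrac{1}{2x}\big)}\sum_{\substack{m\ge0,\ m\equiv \ell-1\bmod\ell\\ n\ge \ell-1}} a_{n,m}x^n \;+\; \frac{\sum_{k=0}^{\ell-2}U_k\big(\tfrac{1}{2x}\big)}{x\,U_{\ell-1}\big(\tfrac{1}{2x}\big)}.$$
   Context: $U_j$ is the $j$th Chebyshev polynomial of the second kind: $U_0(x)=1$, $U_1(x)=2x$, $U_j(x)=2xU_{j-1}(x)-U_{j-2}(x)$. For $n,m\in\mathbb{Z}_{\ge 0}$, $a_{n,m}$ is the number of unit step paths $(x_0,\dots,x_n)$ on $\mathbb{Z}_{\ge0}$ (integers $x_i\ge0$, $|x_i-x_{i-1}|=1$) with $x_0=0$, $x_n=m$. For fixed $\ell\in\mathbb{Z}_{\ge2}$, $b_{n,m}=b_{n,m}(\ell)$ is defined by: $b_{n,m}=a_{n,m}$ if $m\equiv-1\pmod\ell$; $b_{n,m}=b_{n-1,m-1}+b_{n-1,m+1}$ if $m\equiv m_0\pmod\ell$ with $0\le m_0<\ell-2$; $b_{n,m}=b_{n-1,m-1}$ if $m\equiv-2\pmod\ell$; the recursion is used for $n\ge1$ with $b_{0,0}=1$, $b_{0,m}=0$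 for $m>0$, and $b_{n,-1}=0$. The identity is of formal power series in $x$. *)

theory Defs
  imports Complex_Main "HOL-Computational_Algebra.Formal_Laurent_Series"
begin

fun chebU :: "nat \<Rightarrow> 'a::comm_ring_1 \<Rightarrow> 'a" where
  "chebU 0 x = 1"
| "chebU (Suc 0) x = 2 * x"
| "chebU (Suc (Suc j)) x = 2 * x * chebU (Suc j) x - chebU j x"

definition apath :: "nat \<Rightarrow> nat \<Rightarrow> nat" where
  "apath n m = card {xs :: nat list. length xs = Suc n \<and> xs ! 0 = 0 \<and> xs ! n = m \<and>
       (\<forall>i<n. \<bar>int (xs ! Suc i) - int (xs ! i)\<bar> = 1)}"

text \<open>b l n m = b_{n,m}(l); the value b_{n-1,-1} is 0.\<close>
fun bpath :: "nat \<Rightarrow> nat \<Rightarrow> nat \<Rightarrow> nat" where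
  "bpath l 0 m = (if m mod l = l - 1 then apath 0 m else if m = 0 then 1 else 0)"
| "bpath l (Suc n) m =
     (if m mod l = l - 1 then apath (Suc n) m
      else if m mod l = l - 2 then (if m = 0 then 0 else bpath l n (m - 1))
      else (if m = 0 then 0 else bpath l n (m - 1)) + bpath l n (m + 1))"

definition bsum :: "nat \<Rightarrow> nat \<Rightarrow> real" where
  "bsum l n = (\<Sum>m. real (bpath l n m))"

end

(*
  Let g_m = \<Sum>n b_{n,m} x^n. At heights m \<equiv> -1 (mod l) we have b_{n,m} = a_{n,m}, so g_m is
  the a-series there, and these heights cut the others into blocks
  kl, ..., kl + h - 1 of length h = l - 1. Inside block k the g_m solve the tridiagonal system
  g_j = [j = 0] s_k + x (g_{j-1} + g_{j+1}) whose only input s_k is the start (k = 0) or the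
  step up from height kl - 1. With p_k(x) = x^k U_k(1/(2x)) its unique solution is
  p_h g_j = s_k x^j p_{h-1-j}. Summing first over a block and then over all blocks gives
  p_h f = A (x q + p_h) + q, where q = \<Sum>_{k<h} x^{h-1-k} p_k and A is the a-series of the
  statement. The Chebyshev quotients of the statement are exactly (x q + p_h) / p_h and q / p_h.
*)
theory Submission
  imports Defs
begin

lemma walk_nth_le:
  assumes steps: "\<forall>i<n. \<bar>int (xs ! Suc i) - int (xs ! i)\<bar> = 1" and start: "xs ! 0 = 0"
    and "i \<le> n"
  shows "xs ! i \<le> i"
  using \<open>i \<le> n\<close>
proof (induction i)
  case 0
  then show ?case using start by simp
next
  case (Suc i)
  then have "xs ! i \<le> i" by simp
  moreover have "\<bar>int (xs ! Suc i) - int (xs ! i)\<bar> = 1" using steps Suc.prems by simp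
  ultimately show ?case by linarith
qed

lemma apath_eq_0: "n < m \<Longrightarrow> apath n m = 0"
  unfolding apath_def using walk_nth_le[of n _ n] by (fastforce simp: card_eq_0_iff)

lemma bpath_eq_0: "n < m \<Longrightarrow> bpath l n m = 0"
  by (induction n arbitrary: m) (simp_all add: apath_eq_0)

lemma suminf_eq_sum_blocks:
  fixes f :: "nat \<Rightarrow> 'a::{comm_monoid_add,t2_space}"
  assumes "l > 0" and "\<And>m. n < m \<Longrightarrow> f m = 0"
  shows "(\<Sum>m. f m) = (\<Sum>k\<le>n. \<Sum>j<l. f (k * l + j))"
proof -
  have "(\<Sum>m. f m) = (\<Sum>m<Suc n * l. f m)"
  proof (rule suminf_finite)
    fix m assume "m \<notin> {..<Suc n * l}"
    moreover have "Suc n * 1 \<le> Suc n * l" using \<open>l > 0\<close> by (intro mult_le_mono2) simp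
    ultimately have "n < m" by simp
    then show "f m = 0" by (rule assms(2))
  qed simp
  also have "\<dots> = (\<Sum>k<Suc n. sum f {k * l..<k * l + l})"
    by (rule sum.nat_group[symmetric])
  also have "\<dots> = (\<Sum>k\<le>n. \<Sum>j<l. f (k * l + j))"
    by (simp add: lessThan_Suc_atMost sum.shift_bounds_nat_ivl[of f 0 _ l, simplified]
        atLeast0LessThan add.commute)
  finally show ?thesis .
qed

(* Meant for families with W k = O(x^k), where it is the coefficientwise sum; in general only
   the terms k \<le> n enter the n-th coefficient. *)
definition fps_lfsum :: "(nat \<Rightarrow> 'a::comm_monoid_add fps) \<Rightarrow> 'a fps" where
  "fps_lfsum W = Abs_fps (\<lambda>n. \<Sum>k\<le>n. W k $ n)"

lemma fps_lfsum_add: "fps_lfsum (\<lambda>k. V k + W k) = fps_lfsum V + fps_lfsum W"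
  by (simp add: fps_lfsum_def fps_eq_iff sum.distrib)

lemma fps_lfsum_mult_left:
  fixes W :: "nat \<Rightarrow> 'a::comm_semiring_1 fps"
  assumes W: "\<And>k n. n < k \<Longrightarrow> W k $ n = 0"
  shows "c * fps_lfsum W = fps_lfsum (\<lambda>k. c * W k)"
proof (rule fps_ext)
  fix n
  have "(c * fps_lfsum W) $ n = (\<Sum>i=0..n. c $ i * (\<Sum>k\<le>n-i. W k $ (n-i)))"
    by (simp add: fps_mult_nth fps_lfsum_def)
  also have "\<dots> = (\<Sum>i=0..n. c $ i * (\<Sum>k\<le>n. W k $ (n-i)))"
  proof (rule sum.cong[OF refl])
    fix i
    have "(\<Sum>k\<le>n-i. W k $ (n-i)) = (\<Sum>k\<le>n. W k $ (n-i))"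
      by (rule sum.mono_neutral_left) (auto intro: W)
    then show "c $ i * (\<Sum>k\<le>n-i. W k $ (n-i)) = c $ i * (\<Sum>k\<le>n. W k $ (n-i))" by simp
  qed
  also have "\<dots> = (\<Sum>k\<le>n. \<Sum>i=0..n. c $ i * W k $ (n-i))"
    by (simp add: sum_distrib_left sum.swap[of _ "{0..n}"])
  also have "\<dots> = fps_lfsum (\<lambda>k. c * W k) $ n"
    by (simp add: fps_lfsum_def fps_mult_nth)
  finally show "(c * fps_lfsum W) $ n = fps_lfsum (\<lambda>k. c * W k) $ n" .
qed

lemma fps_lfsum_case_nat:
  assumes V: "\<And>k n. n \<le> k \<Longrightarrow> V k $ n = 0"
  shows "fps_lfsum (case_nat c V) = c + fps_lfsum V"
proof (rule fps_ext)
  fix n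
  have "(\<Sum>k<n. V k $ n) = (\<Sum>k\<le>n. V k $ n)"
    by (simp add: lessThan_Suc_atMost[symmetric] V)
  then show "fps_lfsum (case_nat c V) $ n = (c + fps_lfsum V) $ n"
    by (simp add: fps_lfsum_def sum.atMost_shift)
qed

lemma fps_mult_nth_eq_0:
  fixes f g :: "'a::semiring_0 fps"
  assumes "\<And>i. i < k \<Longrightarrow> g $ i = 0" and "n < k"
  shows "(f * g) $ n = 0"
  using assms by (auto simp: fps_mult_nth intro!: sum.neutral)

fun chebU_rev :: "nat \<Rightarrow> 'a::comm_ring_1 fps" where
  "chebU_rev 0 = 1"
| "chebU_rev (Suc 0) = 1"
| "chebU_rev (Suc (Suc k)) = chebU_rev (Suc k) - fps_X^2 * chebU_rev k"

lemma chebU_rev_nth_0 [simp]: "chebU_rev k $ 0 = 1"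
  by (induction k rule: chebU_rev.induct) simp_all

lemma chebU_rev_nonzero [simp]: "chebU_rev k \<noteq> 0"
  using chebU_rev_nth_0[of k] by (metis fps_zero_nth zero_neq_one)

lemma X_power_mult_chebU_rev_rec:
  assumes "j < h"
  shows "(fps_X^j * chebU_rev (h - Suc j) :: 'a::comm_ring_1 fps) =
      (if j = 0 then chebU_rev h else 0) +
      fps_X * ((if j = 0 then 0 else fps_X^(j-1) * chebU_rev (h - j)) +
               (if Suc j < h then fps_X^Suc j * chebU_rev (h - Suc (Suc j)) else 0))"
proof -
  consider "j = 0" "h = 1" | "j = 0" "h \<ge> 2" | "j > 0" "Suc j = h" | "j > 0" "Suc j < h"
    using assms by linarith
  then show ?thesis
  proof cases
    case 1
    then show ?thesis by simp
  next
    case 2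
    then obtain t where "h = Suc (Suc t)" by (metis add_2_eq_Suc le_Suc_ex)
    with 2 show ?thesis by (simp add: algebra_simps power2_eq_square)
  next
    case 3
    then obtain t where "j = Suc t" "h = Suc (Suc t)" by (metis gr0_implies_Suc)
    then show ?thesis by simp
  next
    case 4
    then obtain s t where st: "j = Suc s" "h - j = Suc (Suc t)"
      by (metis gr0_implies_Suc Suc_diff_Suc Suc_lessD)
    then have "h - Suc j = Suc t" "h - Suc (Suc j) = t" "h - Suc s = Suc (Suc t)" by auto
    with 4 st show ?thesis by (simp add: algebra_simps power2_eq_square)
  qed
qed

lemma X_recursive_family_eq_0:
  fixes E :: "nat \<Rightarrow> 'a::comm_ring_1 fps"
  assumes E: "\<And>j. j < h \<Longrightarrow>
      E j = fps_X * ((if j = 0 then 0 else E (j-1)) + (if Suc j < h then E (Suc j) else 0))"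
    and "j < h"
  shows "E j = 0"
proof -
  have "\<forall>j<h. E j $ n = 0" for n
  proof (induction n)
    case 0
    then show ?case using E by (auto simp: fps_X_mult_nth)
  next
    case (Suc n)
    show ?case
    proof (intro allI impI)
      fix j assume "j < h"
      then show "E j $ Suc n = 0"
        using Suc.IH by (subst E[OF \<open>j < h\<close>]) (auto simp: fps_X_mult_nth)
    qed
  qed
  with \<open>j < h\<close> show ?thesis by (simp add: fps_eq_iff)
qed

lemma tridiagonal_system_solution:
  fixes v :: "nat \<Rightarrow> 'a::comm_ring_1 fps"
  assumes v: "\<And>j. j < h \<Longrightarrow> v j = (if j = 0 then c else 0) +
      fps_X * ((if j = 0 then 0 else v (j-1)) + (if Suc j < h then v (Suc j) else 0))"
    and "j < h"
  shows "chebU_rev h * v j = c * fps_X^j * chebU_rev (h - Suc j)"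
proof -
  define E where "E j = chebU_rev h * v j - c * fps_X^j * chebU_rev (h - Suc j)" for j
  have "E j = fps_X * ((if j = 0 then 0 else E (j-1)) + (if Suc j < h then E (Suc j) else 0))"
    if "j < h" for j
    using arg_cong[OF X_power_mult_chebU_rev_rec[OF that], of "(*) c"] v[OF that] that
    by (cases j) (auto simp: E_def algebra_simps)
  then have "E j = 0" using X_recursive_family_eq_0 \<open>j < h\<close> by blast
  then show ?thesis by (simp add: E_def)
qed

definition apath_fps :: "nat \<Rightarrow> real fps" where
  "apath_fps m = Abs_fps (\<lambda>n. real (apath n m))"

definition bpath_fps :: "nat \<Rightarrow> nat \<Rightarrow> real fps" where
  "bpath_fps l m = Abs_fps (\<lambda>n. real (bpath l n m))"

lemma apath_fps_nth_eq_0: "n < m \<Longrightarrow> apath_fps m $ n = 0"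
  by (simp add: apath_fps_def apath_eq_0)

lemma bpath_fps_nth_eq_0: "n < m \<Longrightarrow> bpath_fps l m $ n = 0"
  by (simp add: bpath_fps_def bpath_eq_0)

lemma bpath_fps_top: "m mod l = l - 1 \<Longrightarrow> bpath_fps l m = apath_fps m"
  unfolding bpath_fps_def apath_fps_def by (rule fps_ext) (case_tac n, auto)

lemma bpath_fps_block_top:
  "l > 0 \<Longrightarrow> bpath_fps l (k * l + (l - 1)) = apath_fps (k * l + (l - 1))"
  using mod_mult_self3[of k l "l - 1"] by (intro bpath_fps_top) simp

lemma bpath_fps_rec:
  "m mod l \<noteq> l - 1 \<Longrightarrow> bpath_fps l m = (if m = 0 then 1 else 0) +
     fps_X * ((if m = 0 then 0 else bpath_fps l (m-1)) +
              (if m mod l = l - 2 then 0 else bpath_fps l (m+1)))"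
  unfolding bpath_fps_def by (rule fps_ext) (case_tac n, auto simp: fps_X_mult_nth)

text \<open>Heights \<open>k * l, \<dots>, k * l + l - 2\<close> form the \<open>k\<close>-th block. A walk enters it either at
  the start (\<open>k = 0\<close>) or by a step up from height \<open>k * l - 1\<close>, where \<open>b\<close> agrees with \<open>a\<close>.\<close>
definition block_source :: "nat \<Rightarrow> nat \<Rightarrow> real fps" where
  "block_source l k = (case k of 0 \<Rightarrow> 1 | Suc k' \<Rightarrow> fps_X * apath_fps (k' * l + (l - 1)))"

lemma bpath_fps_block_rec:
  assumes "l \<ge> 2" and "j < l - 1"
  shows "bpath_fps l (k * l + j) = (if j = 0 then block_source l k else 0) +
     fps_X * ((if j = 0 then 0 else bpath_fps l (k * l + (j - 1))) +
              (if Suc j < l - 1 then bpath_fps l (k * l + Suc j) else 0))"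
proof -
  have mod: "(k * l + j) mod l = j" using assms by simp
  have top: "l - 2 = j \<longleftrightarrow> \<not> Suc j < l - 1" using assms by linarith
  show ?thesis
  proof (cases "j = 0")
    case True
    show ?thesis
    proof (cases k)
      case 0
      with True assms show ?thesis by (subst bpath_fps_rec) (auto simp: block_source_def top)
    next
      case (Suc k')
      have "k * l + j - 1 = k' * l + (l - 1)" using True Suc assms by simp
      with True Suc assms mod top bpath_fps_block_top[of l k'] show ?thesis
        by (subst bpath_fps_rec) (auto simp: block_source_def distrib_left)
    qed
  next
    case False
    then have "k * l + j - 1 = k * l + (j - 1)" "k * l + j \<noteq> 0" by auto
    with False assms mod top show ?thesis by (subst bpath_fps_rec) auto
  qed
qed

lemma chebU_rev_mult_bpath_fps:
  assumes "l \<ge> 2" and "j < l - 1"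
  shows "chebU_rev (l - 1) * bpath_fps l (k * l + j) =
    block_source l k * fps_X^j * chebU_rev (l - 1 - Suc j)"
  using tridiagonal_system_solution[where v = "\<lambda>j. bpath_fps l (k * l + j)",
      OF bpath_fps_block_rec[OF assms(1)] assms(2)]
  by simp

definition chebU_rev_sum :: "nat \<Rightarrow> 'a::comm_ring_1 fps" where
  "chebU_rev_sum h = (\<Sum>k<h. fps_X^(h - Suc k) * chebU_rev k)"

lemma chebU_rev_mult_block:
  assumes "l \<ge> 2"
  shows "chebU_rev (l - 1) * (\<Sum>j<l. bpath_fps l (k * l + j)) =
    chebU_rev (l - 1) * apath_fps (k * l + (l - 1)) + block_source l k * chebU_rev_sum (l - 1)"
proof -
  have l: "l = Suc (l - 1)" using assms by simp
  have "bpath_fps l (k * l + (l - 1)) = apath_fps (k * l + (l - 1))"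
    using assms by (intro bpath_fps_block_top) simp
  moreover have "chebU_rev (l - 1) * (\<Sum>j<l - 1. bpath_fps l (k * l + j)) =
      block_source l k * chebU_rev_sum (l - 1)"
  proof -
    have "chebU_rev (l - 1) * (\<Sum>j<l - 1. bpath_fps l (k * l + j)) =
        (\<Sum>j<l - 1. block_source l k * (fps_X^j * chebU_rev (l - 1 - Suc j)))"
      unfolding sum_distrib_left
    proof (rule sum.cong[OF refl])
      fix j assume "j \<in> {..<l - 1}"
      then show "chebU_rev (l - 1) * bpath_fps l (k * l + j) =
          block_source l k * (fps_X^j * chebU_rev (l - 1 - Suc j))"
        using chebU_rev_mult_bpath_fps[OF assms, of j k] by (simp add: mult.assoc)
    qed
    also have "\<dots> = block_source l k * chebU_rev_sum (l - 1)"
      unfolding chebU_rev_sum_def sum_distrib_left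
      by (subst sum.nat_diff_reindex[symmetric]) (auto intro!: sum.cong simp: Suc_diff_Suc)
    finally show ?thesis .
  qed
  ultimately show ?thesis
    by (subst l) (simp add: sum.lessThan_Suc algebra_simps)
qed

lemma fps_bsum_eq_lfsum:
  assumes "l > 0"
  shows "Abs_fps (bsum l) = fps_lfsum (\<lambda>k. \<Sum>j<l. bpath_fps l (k * l + j))"
proof (rule fps_ext)
  fix n
  have "bsum l n = (\<Sum>k\<le>n. \<Sum>j<l. real (bpath l n (k * l + j)))"
    unfolding bsum_def using assms by (rule suminf_eq_sum_blocks) (simp add: bpath_eq_0)
  then show "Abs_fps (bsum l) $ n = fps_lfsum (\<lambda>k. \<Sum>j<l. bpath_fps l (k * l + j)) $ n"
    by (simp add: fps_lfsum_def bpath_fps_def fps_sum_nth)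
qed

lemma fps_apath_top_eq_lfsum:
  assumes "l > 0"
  shows "Abs_fps (\<lambda>n. if n \<ge> l - 1
            then (\<Sum>m. if m mod l = l - 1 then real (apath n m) else 0) else 0) =
         fps_lfsum (\<lambda>k. apath_fps (k * l + (l - 1)))"
proof (rule fps_ext)
  fix n
  have "(\<Sum>m. if m mod l = l - 1 then real (apath n m) else 0) =
      (\<Sum>k\<le>n. \<Sum>j<l. if (k * l + j) mod l = l - 1 then real (apath n (k * l + j)) else 0)"
    using assms by (rule suminf_eq_sum_blocks) (simp add: apath_eq_0)
  also have "\<dots> = (\<Sum>k\<le>n. \<Sum>j<l. if j = l - 1 then real (apath n (k * l + j)) else 0)"
    by (intro sum.cong refl) simp
  also have "\<dots> = (\<Sum>k\<le>n. real (apath n (k * l + (l - 1))))"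
    using assms by (simp add: sum.delta')
  finally have "(\<Sum>m. if m mod l = l - 1 then real (apath n m) else 0) =
      (\<Sum>k\<le>n. real (apath n (k * l + (l - 1))))" .
  moreover have "(\<Sum>k\<le>n. real (apath n (k * l + (l - 1)))) = 0" if "n < l - 1"
    using that by (intro sum.neutral) (simp add: apath_eq_0 trans_less_add2)
  ultimately show "Abs_fps (\<lambda>n. if n \<ge> l - 1
            then (\<Sum>m. if m mod l = l - 1 then real (apath n m) else 0) else 0) $ n =
         fps_lfsum (\<lambda>k. apath_fps (k * l + (l - 1))) $ n"
    by (simp add: fps_lfsum_def apath_fps_def not_le)
qed

lemma chebU_rev_mult_fps_bsum:
  assumes "l \<ge> 2"
  defines "A \<equiv> fps_lfsum (\<lambda>k. apath_fps (k * l + (l - 1)))"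
  shows "chebU_rev (l - 1) * Abs_fps (bsum l) =
    A * (fps_X * chebU_rev_sum (l - 1) + chebU_rev (l - 1)) + chebU_rev_sum (l - 1)"
proof -
  let ?p = "chebU_rev (l - 1) :: real fps" and ?q = "chebU_rev_sum (l - 1) :: real fps"
  have below_block: "n < k * l + j" if "n < k" for n k j
  proof -
    have "k \<le> k * l" using assms(1) by simp
    with that show ?thesis by linarith
  qed
  have A_vanish: "apath_fps (k * l + (l - 1)) $ n = 0" if "n < k" for k n
    using that below_block by (simp add: apath_fps_nth_eq_0)
  have XA_vanish: "(fps_X * apath_fps (k * l + (l - 1))) $ n = 0" if "n < Suc k" for k n
    using that A_vanish by (cases n) simp_all
  have "?p * Abs_fps (bsum l) = fps_lfsum (\<lambda>k. ?p * (\<Sum>j<l. bpath_fps l (k * l + j)))"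
    using assms(1) below_block
    by (simp add: fps_bsum_eq_lfsum fps_lfsum_mult_left fps_sum_nth bpath_fps_nth_eq_0)
  also have "\<dots> = fps_lfsum (\<lambda>k. ?p * apath_fps (k * l + (l - 1)) + block_source l k * ?q)"
    by (simp only: chebU_rev_mult_block[OF assms(1)])
  also have "\<dots> = ?p * A + fps_lfsum (\<lambda>k. block_source l k * ?q)"
    unfolding fps_lfsum_add A_def using fps_lfsum_mult_left[OF A_vanish, where c = ?p] by simp
  also have "(\<lambda>k. block_source l k * ?q) =
      case_nat ?q (\<lambda>k. ?q * (fps_X * apath_fps (k * l + (l - 1))))"
    by (auto simp: block_source_def fun_eq_iff split: nat.split)
  also have "fps_lfsum \<dots> = ?q + fps_lfsum (\<lambda>k. ?q * (fps_X * apath_fps (k * l + (l - 1))))"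
    by (rule fps_lfsum_case_nat, rule fps_mult_nth_eq_0[OF XA_vanish]) auto
  also have "\<dots> = ?q + ?q * (fps_X * A)"
  proof -
    have "fps_X * A = fps_lfsum (\<lambda>k. fps_X * apath_fps (k * l + (l - 1)))"
      unfolding A_def by (rule fps_lfsum_mult_left[OF A_vanish])
    moreover have "?q * fps_lfsum (\<lambda>k. fps_X * apath_fps (k * l + (l - 1))) =
        fps_lfsum (\<lambda>k. ?q * (fps_X * apath_fps (k * l + (l - 1))))"
      by (rule fps_lfsum_mult_left, rule XA_vanish) simp
    ultimately show ?thesis by simp
  qed
  finally show ?thesis by (simp add: algebra_simps)
qed

lemma fps_to_fls_sum: "fps_to_fls (sum f A) = (\<Sum>x\<in>A. fps_to_fls (f x))"
  by (induction A rule: infinite_finite_induct) auto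

lemma X_power_mult_chebU_inverse_2X:
  "fls_X ^ k * chebU k (inverse (2 * fls_X) :: 'a::field_char_0 fls) = fps_to_fls (chebU_rev k)"
proof -
  let ?y = "inverse (2 * fls_X) :: 'a fls"
  \<comment> \<open>The simplifier turns \<open>inverse fls_X\<close> into \<open>fls_shift 1 1\<close>, hence the facts about
    an abstract \<open>x\<close> and the controlled rewriting below.\<close>
  have half: "x * (2 * inverse (2 * x)) = 1" if "x \<noteq> 0" for x :: "'a fls"
    using that by (simp add: field_simps)
  have ring: "x^Suc (Suc k) * (2 * y * u1 - u0) = x * (2 * y) * (x^Suc k * u1) - x^2 * (x^k * u0)"
    for k and x y u0 u1 :: "'a fls"
    by (simp add: algebra_simps power2_eq_square)
  show ?thesis
  proof (induction k rule: chebU_rev.induct)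
    case 1
    then show ?case by simp
  next
    case 2
    show ?case
      by (simp only: power_Suc0_right chebU.simps chebU_rev.simps fps_one_to_fls half[OF fls_X_nonzero])
  next
    case (3 k)
    have "fls_X ^ Suc (Suc k) * chebU (Suc (Suc k)) ?y =
        fps_to_fls (chebU_rev (Suc k)) - fls_X^2 * fps_to_fls (chebU_rev k)"
      by (simp only: chebU.simps ring half[OF fls_X_nonzero] mult_1_left 3)
    then show ?case
      by (simp add: fls_times_fps_to_fls fps_to_fls_power)
  qed
qed

lemma X_power_mult_sum_chebU_inverse_2X:
  "fls_X ^ h * (\<Sum>k<h. chebU k (inverse (2 * fls_X) :: 'a::field_char_0 fls)) =
    fls_X * fps_to_fls (chebU_rev_sum h)"
proof -
  have "fls_X ^ h * (\<Sum>k<h. chebU k (inverse (2 * fls_X) :: 'a fls)) =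
      (\<Sum>k<h. fls_X^(h - k) * (fls_X^k * chebU k (inverse (2 * fls_X))))"
    unfolding sum_distrib_left
    by (intro sum.cong refl) (simp add: mult.assoc[symmetric] power_add[symmetric])
  also have "\<dots> = (\<Sum>k<h. fls_X^(h - k) * fps_to_fls (chebU_rev k))"
    by (simp only: X_power_mult_chebU_inverse_2X)
  also have "\<dots> = (\<Sum>k<h. fls_X * (fls_X^(h - Suc k) * fps_to_fls (chebU_rev k)))"
    by (intro sum.cong refl)
      (simp add: mult.assoc[symmetric] power_Suc[symmetric] Suc_diff_Suc del: power_Suc)
  also have "\<dots> = fls_X * fps_to_fls (chebU_rev_sum h)"
    by (simp add: chebU_rev_sum_def fps_to_fls_sum fls_times_fps_to_fls fps_to_fls_power
        sum_distrib_left)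
  finally show ?thesis .
qed

lemma chebU_inverse_2X_quotients:
  fixes h :: nat
  defines "y \<equiv> inverse (2 * fls_X) :: 'a::field_char_0 fls"
    and "P \<equiv> fps_to_fls (chebU_rev h) :: 'a fls" and "Q \<equiv> fps_to_fls (chebU_rev_sum h) :: 'a fls"
  shows "(\<Sum>k\<le>h. chebU k y) / chebU h y = (fls_X * Q + P) / P"
    and "(\<Sum>k<h. chebU k y) / (fls_X * chebU h y) = Q / P"
proof -
  \<comment> \<open>Abstracted from \<open>fls_X\<close> for the reason given in the proof above.\<close>
  have quot: "(s + u) / u = (x * q + p) / p" "s / (x * u) = q / p"
    if "u = p / d" "s = x * q / d" "d \<noteq> 0" "p \<noteq> 0" "x \<noteq> 0" for s u x q p d :: "'a fls"
    unfolding that(1,2) using that(3-5) by (simp_all add: field_simps)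
  have D: "(fls_X :: 'a fls) ^ h \<noteq> 0" by simp
  have "fls_X ^ h * chebU h y = P"
    unfolding y_def P_def by (rule X_power_mult_chebU_inverse_2X)
  then have U: "chebU h y = P / fls_X ^ h"
    using D by (metis nonzero_mult_div_cancel_left)
  have "fls_X ^ h * (\<Sum>k<h. chebU k y) = fls_X * Q"
    unfolding y_def Q_def by (rule X_power_mult_sum_chebU_inverse_2X)
  then have S: "(\<Sum>k<h. chebU k y) = fls_X * Q / fls_X ^ h"
    using D by (metis nonzero_mult_div_cancel_left)
  have "P \<noteq> 0" by (simp add: P_def)
  note quot = quot[OF U S D this fls_X_nonzero]
  show "(\<Sum>k\<le>h. chebU k y) / chebU h y = (fls_X * Q + P) / P"
    unfolding lessThan_Suc_atMost[symmetric] sum.lessThan_Suc by (rule quot(1))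
  show "(\<Sum>k<h. chebU k y) / (fls_X * chebU h y) = Q / P"
    by (rule quot(2))
qed

theorem lemma2p11:
  fixes l :: nat
  assumes "l \<ge> 2"
  defines "y \<equiv> inverse (2 * fls_X) :: real fls"
  shows "fps_to_fls (Abs_fps (\<lambda>n. bsum l n)) =
           (\<Sum>k = 0..l-1. chebU k y) / chebU (l-1) y *
             fps_to_fls (Abs_fps (\<lambda>n. if n \<ge> l - 1
                then (\<Sum>m. if m mod l = l - 1 then real (apath n m) else 0) else 0))
         + (\<Sum>k = 0..l-2. chebU k y) / (fls_X * chebU (l-1) y)"
proof -
  define P where "P = fps_to_fls (chebU_rev (l - 1) :: real fps)"
  define Q where "Q = fps_to_fls (chebU_rev_sum (l - 1) :: real fps)"
  define A where "A = fps_to_fls (fps_lfsum (\<lambda>k. apath_fps (k * l + (l - 1))))"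
  have "P * fps_to_fls (Abs_fps (bsum l)) = A * (fls_X * Q + P) + Q"
    using arg_cong[OF chebU_rev_mult_fps_bsum[OF assms(1)], of fps_to_fls]
    by (simp add: P_def Q_def A_def fls_times_fps_to_fls)
  then have F: "fps_to_fls (Abs_fps (bsum l)) = (fls_X * Q + P) / P * A + Q / P"
    by (simp add: P_def field_simps)
  have top: "fps_to_fls (Abs_fps (\<lambda>n. if n \<ge> l - 1
      then (\<Sum>m. if m mod l = l - 1 then real (apath n m) else 0) else 0)) = A"
    unfolding A_def using assms(1) by (subst fps_apath_top_eq_lfsum) simp_all
  have ranges: "{0..l-1} = {..l-1}" "{0..l-2} = {..<l-1}"
    using assms(1) by auto
  show ?thesis
    unfolding top ranges y_def chebU_inverse_2X_quotients P_def[symmetric] Q_def[symmetric]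
    by (rule F)
qed

end
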